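(* For every $m\in\mathbb{N}$, the matrix $C_m=\frac12\mathrm{I}_m+\mathrm{U}_m$ is congruent to $\Gamma_2\oplus\mathrm{H}_2(-1)^{\oplus (m-2)/2}$ if $m$ is even, and to $1\oplus\mathrm{H}_2(-1)^{\oplus(m-1)/2}$ if $m$ is odd.
   Context: $\mathrm{I}_m$ is the identity and $\mathrm{U}_m\in\mathbb{R}^{m\times m}$ the strictly upper triangular matrix with all entries above the diagonal equal to $1$ ($C_m$ is the level-2 signature of the canonical axis path in $\mathbb{R}^m$). $\Gamma_2=\begin{bmatrix}0&-1\\1&1\end{bmatrix}$, $\mathrm{H}_2(-1)=\begin{bmatrix}0&1\\-1&0\end{bmatrix}$. $M\oplus W$ denotes the block diagonal matrix, $M^{\oplus n}$ the $n$-fold block diagonal sum. $M,V\in\mathbb{R}^{m\times m}$ are congruent if $PMP^\top=V$ for some invertible real $P$. *)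

theory Defs
  imports "Jordan_Normal_Form.Matrix" "Jordan_Normal_Form.Determinant"
begin

definition U_mat :: "nat \<Rightarrow> real mat" where
  "U_mat m = mat m m (\<lambda>(i,j). if i < j then 1 else 0)"

definition C_mat :: "nat \<Rightarrow> real mat" where
  "C_mat m = (1/2) \<cdot>\<^sub>m (1\<^sub>m m) + U_mat m"

definition Gamma2 :: "real mat" where
  "Gamma2 = mat_of_rows_list 2 [[0, -1], [1, 1]]"

definition H2neg :: "real mat" where
  "H2neg = mat_of_rows_list 2 [[0, 1], [-1, 0]]"

definition one1 :: "real mat" where
  "one1 = mat 1 1 (\<lambda>_. 1)"

definition bdiag :: "'a::zero mat \<Rightarrow> 'a mat \<Rightarrow> 'a mat" where
  "bdiag A B = four_block_mat A (0\<^sub>m (dim_row A) (dim_col B)) (0\<^sub>m (dim_row B) (dim_col A)) B"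

fun bdiag_pow :: "'a::zero mat \<Rightarrow> nat \<Rightarrow> 'a mat" where
  "bdiag_pow M 0 = 0\<^sub>m 0 0"
| "bdiag_pow M (Suc n) = bdiag M (bdiag_pow M n)"

definition congruent_mat :: "real mat \<Rightarrow> real mat \<Rightarrow> bool" where
  "congruent_mat M V \<longleftrightarrow>
     (\<exists>k. M \<in> carrier_mat k k \<and> V \<in> carrier_mat k k \<and>
        (\<exists>P \<in> carrier_mat k k. invertible_mat P \<and> P * M * transpose_mat P = V))"

end

theory Submission
  imports Defs
begin

text \<open>Split \<open>C\<^sub>a\<^sub>+\<^sub>b\<close> into the blocks \<open>C\<^sub>a\<close>, the all-ones \<open>a \<times> b\<close> block \<open>J\<close>, \<open>0\<close> and \<open>C\<^sub>b\<close>.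
  Congruence by \<open>I\<^sub>a \<oplus> Q\<close> keeps \<open>C\<^sub>a\<close>, replaces \<open>C\<^sub>3\<close> by \<open>Q C\<^sub>3 Q\<^sup>T\<close> and \<open>J\<close> by \<open>J Q\<^sup>T\<close>.
  For a suitable \<open>Q\<close> one has \<open>Q C\<^sub>3 Q\<^sup>T = (1/2) \<oplus> H\<^sub>2(-1)\<close>, and the last two rows of
  \<open>Q\<close> sum to zero, so \<open>J Q\<^sup>T\<close> is the all-ones block of width one; hence
  \<open>C\<^sub>a\<^sub>+\<^sub>3 \<cong> C\<^sub>a\<^sub>+\<^sub>1 \<oplus> H\<^sub>2(-1)\<close>. Iterating this peels off copies of \<open>H\<^sub>2(-1)\<close> until
  \<open>C\<^sub>1\<close> or \<open>C\<^sub>2\<close> remains, which are congruent to \<open>1\<close> and \<open>\<Gamma>\<^sub>2\<close> after rescaling by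
  \<open>\<surd>2\<close>.\<close>

lemma invertible_mat_if_right_inverse:
  fixes A :: "'a::field mat"
  assumes "A \<in> carrier_mat n n" "B \<in> carrier_mat n n" "A * B = 1\<^sub>m n"
  shows "invertible_mat A"
  using assms mat_mult_left_right_inverse[OF assms]
  unfolding invertible_mat_def inverts_mat_def by auto

lemma congruent_matI:
  assumes "A \<in> carrier_mat n n" "P \<in> carrier_mat n n" "P' \<in> carrier_mat n n"
    and "P * P' = 1\<^sub>m n" "P * A * P\<^sup>T = V"
  shows "congruent_mat A V"
  unfolding congruent_mat_def
  using assms invertible_mat_if_right_inverse[of P n P'] by force

lemma congruent_matE:
  assumes "congruent_mat A V"
  obtains n P P' where "A \<in> carrier_mat n n" "V \<in> carrier_mat n n"
    "P \<in> carrier_mat n n" "P' \<in> carrier_mat n n" "P * P' = 1\<^sub>m n" "P * A * P\<^sup>T = V"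
proof -
  obtain n P where A: "A \<in> carrier_mat n n" and V: "V \<in> carrier_mat n n"
    and P: "P \<in> carrier_mat n n" "invertible_mat P" "P * A * P\<^sup>T = V"
    using assms unfolding congruent_mat_def by blast
  then obtain P' where "P * P' = 1\<^sub>m n" "P' * P = 1\<^sub>m (dim_row P')"
    unfolding invertible_mat_def inverts_mat_def by auto
  moreover from this P(1) have "P' \<in> carrier_mat n n"
    by (metis carrier_matD(2) carrier_matI index_mult_mat(3) index_one_mat(3))
  ultimately show thesis
    using that A V P by auto
qed

lemma congruent_mat_refl: "A \<in> carrier_mat n n \<Longrightarrow> congruent_mat A A"
  by (rule congruent_matI[of A n "1\<^sub>m n" "1\<^sub>m n"]) auto

lemma congruent_mat_trans [trans]:
  assumes "congruent_mat A B" "congruent_mat B C"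
  shows "congruent_mat A C"
proof -
  obtain n P P' where A: "A \<in> carrier_mat n n" and B: "B \<in> carrier_mat n n"
    and P: "P \<in> carrier_mat n n" "P' \<in> carrier_mat n n" "P * P' = 1\<^sub>m n" "P * A * P\<^sup>T = B"
    using assms(1) by (rule congruent_matE)
  obtain k R R' where "B \<in> carrier_mat k k"
    and R: "R \<in> carrier_mat k k" "R' \<in> carrier_mat k k" "R * R' = 1\<^sub>m k" "R * B * R\<^sup>T = C"
    using assms(2) by (rule congruent_matE)
  with B have R: "R \<in> carrier_mat n n" "R' \<in> carrier_mat n n" "R * R' = 1\<^sub>m n" "R * B * R\<^sup>T = C"
    by auto
  show ?thesis
  proof (rule congruent_matI[OF A, of "R * P" "P' * R'"])
    have "P * (P' * R') = R'"
      by (subst assoc_mult_mat[symmetric, of P n n P' n R' n]) (use P R in auto)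
    then show "R * P * (P' * R') = 1\<^sub>m n"
      using P R by (metis assoc_mult_mat mult_carrier_mat)
    have "R * P * A * (R * P)\<^sup>T = R * (P * A * P\<^sup>T) * R\<^sup>T"
      using A P(1) R(1) by (simp add: transpose_mult[of R n n P n] assoc_mult_mat[of _ n n _ n _ n])
    then show "R * P * A * (R * P)\<^sup>T = C"
      by (simp only: P(4) R(4))
  qed (use P R in auto)
qed

lemma bdiag_carrier:
  "A \<in> carrier_mat a a \<Longrightarrow> B \<in> carrier_mat b b \<Longrightarrow> bdiag A B \<in> carrier_mat (a + b) (a + b)"
  by (simp add: bdiag_def)

lemma mult_bdiag:
  fixes A :: "'a::semiring_0 mat"
  assumes "A \<in> carrier_mat a b" "B \<in> carrier_mat c d" "A' \<in> carrier_mat b e" "B' \<in> carrier_mat d f"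
  shows "bdiag A B * bdiag A' B' = bdiag (A * A') (B * B')"
  unfolding bdiag_def using assms
  by (subst mult_four_block_mat[of _ a b _ d _ c]) auto

lemma transpose_bdiag:
  assumes "A \<in> carrier_mat a b" "B \<in> carrier_mat c d"
  shows "(bdiag A B)\<^sup>T = bdiag A\<^sup>T B\<^sup>T"
  unfolding bdiag_def using assms
  by (subst transpose_four_block_mat[of _ a b _ d _ c]) auto

lemma bdiag_one: "bdiag (1\<^sub>m a) (1\<^sub>m b) = (1\<^sub>m (a + b) :: 'a::{zero,one} mat)"
  unfolding bdiag_def by (rule eq_matI) auto

lemma bdiag_assoc: "bdiag A (bdiag B C) = bdiag (bdiag A B) C"
  unfolding bdiag_def using assoc_four_block_mat[of A B C] by simp

lemma bdiag_empty_left: "bdiag (0\<^sub>m 0 0) A = A"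
  unfolding bdiag_def by (rule eq_matI) auto

lemma bdiag_empty_right: "bdiag A (0\<^sub>m 0 0) = A"
  unfolding bdiag_def by (rule eq_matI) auto

lemma bdiag_pow_Suc_right: "bdiag_pow M (Suc n) = bdiag (bdiag_pow M n) M"
  by (induction n) (simp_all add: bdiag_empty_left bdiag_empty_right, metis bdiag_assoc)

lemma congruent_mat_bdiag:
  assumes "congruent_mat A A'" "congruent_mat B B'"
  shows "congruent_mat (bdiag A B) (bdiag A' B')"
proof -
  obtain a P P' where A: "A \<in> carrier_mat a a"
    and P: "P \<in> carrier_mat a a" "P' \<in> carrier_mat a a" "P * P' = 1\<^sub>m a" "P * A * P\<^sup>T = A'"
    using assms(1) by (rule congruent_matE)
  obtain b R R' where B: "B \<in> carrier_mat b b"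
    and R: "R \<in> carrier_mat b b" "R' \<in> carrier_mat b b" "R * R' = 1\<^sub>m b" "R * B * R\<^sup>T = B'"
    using assms(2) by (rule congruent_matE)
  show ?thesis
  proof (rule congruent_matI[of _ "a + b" "bdiag P R" "bdiag P' R'"])
    show "bdiag P R * bdiag P' R' = 1\<^sub>m (a + b)"
      using P R by (simp add: mult_bdiag[of _ a a _ b b _ a _ b] bdiag_one)
    show "bdiag P R * bdiag A B * (bdiag P R)\<^sup>T = bdiag A' B'"
      using A B P R
      by (simp add: transpose_bdiag[of _ a a _ b b] mult_bdiag[of _ a a _ b b _ a _ b])
  qed (use A B P R in \<open>auto intro: bdiag_carrier\<close>)
qed

lemma C_mat_carrier: "C_mat n \<in> carrier_mat n n"
  by (simp add: C_mat_def U_mat_def)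

lemma C_mat_add:
  "C_mat (a + b) = four_block_mat (C_mat a) (mat a b (\<lambda>_. 1)) (0\<^sub>m b a) (C_mat b)"
  by (rule eq_matI) (auto simp: C_mat_def U_mat_def)

lemma congruence_four_block_mat_upper:
  fixes A :: "'a::comm_semiring_1 mat"
  assumes "A \<in> carrier_mat a a" "B \<in> carrier_mat a b" "D \<in> carrier_mat b b" "Q \<in> carrier_mat b b"
  shows "bdiag (1\<^sub>m a) Q * four_block_mat A B (0\<^sub>m b a) D * (bdiag (1\<^sub>m a) Q)\<^sup>T
    = four_block_mat A (B * Q\<^sup>T) (0\<^sub>m b a) (Q * D * Q\<^sup>T)"
  using assms unfolding transpose_bdiag[OF one_carrier_mat assms(4)]
  by (simp add: bdiag_def mult_four_block_mat[of _ a a _ b _ b _ _ a _ b])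

lemma H2neg_carrier: "H2neg \<in> carrier_mat 2 2"
  by (simp add: H2neg_def mat_of_rows_list_def numeral_2_eq_2)

definition Q3 :: "real mat" where
  "Q3 = mat_of_rows_list 3 [[1, -1, 1], [0, 2, -2], [-1, 1, 0]]"

definition Q3_inv :: "real mat" where
  "Q3_inv = mat_of_rows_list 3 [[1, 1/2, 0], [1, 1/2, 1], [1, 0, 1]]"

lemma Q3_carrier: "Q3 \<in> carrier_mat 3 3"
  and Q3_inv_carrier: "Q3_inv \<in> carrier_mat 3 3"
  by (simp_all add: Q3_def Q3_inv_def mat_of_rows_list_def numeral_3_eq_3)

lemma Q3_mult_Q3_inv: "Q3 * Q3_inv = 1\<^sub>m 3"
  by (rule eq_matI)
    (auto simp: Q3_def Q3_inv_def mat_of_rows_list_def scalar_prod_def less_Suc_eq numeral_eq_Suc)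

lemma Q3_congruence_C_mat_3: "Q3 * C_mat 3 * Q3\<^sup>T = bdiag (mat 1 1 (\<lambda>_. 1/2)) H2neg"
  by (rule eq_matI)
    (auto simp: Q3_def C_mat_def U_mat_def bdiag_def H2neg_def mat_of_rows_list_def
      scalar_prod_def less_Suc_eq numeral_eq_Suc)

lemma ones_mult_transpose_Q3: "mat a 3 (\<lambda>_. 1) * Q3\<^sup>T = mat a 3 (\<lambda>(i, j). if j = 0 then 1 else 0)"
  by (rule eq_matI)
    (auto simp: Q3_def mat_of_rows_list_def scalar_prod_def less_Suc_eq numeral_eq_Suc)

lemma C_mat_add3_congruent: "congruent_mat (C_mat (a + 3)) (bdiag (C_mat (a + 1)) H2neg)"
proof (rule congruent_matI[of _ "a + 3" "bdiag (1\<^sub>m a) Q3" "bdiag (1\<^sub>m a) Q3_inv"])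
  show "bdiag (1\<^sub>m a) Q3 * bdiag (1\<^sub>m a) Q3_inv = 1\<^sub>m (a + 3)"
    using Q3_carrier Q3_inv_carrier
    by (simp add: mult_bdiag[of _ a a _ 3 3 _ a _ 3] Q3_mult_Q3_inv bdiag_one)
  have "bdiag (1\<^sub>m a) Q3 * C_mat (a + 3) * (bdiag (1\<^sub>m a) Q3)\<^sup>T
      = four_block_mat (C_mat a) (mat a 3 (\<lambda>(i, j). if j = 0 then 1 else 0)) (0\<^sub>m 3 a)
          (bdiag (mat 1 1 (\<lambda>_. 1/2)) H2neg)"
    unfolding C_mat_add
    by (subst congruence_four_block_mat_upper)
      (simp_all add: C_mat_carrier Q3_carrier ones_mult_transpose_Q3 Q3_congruence_C_mat_3)
  also have "\<dots> = bdiag (C_mat (a + 1)) H2neg"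
    by (rule eq_matI) (auto simp: bdiag_def C_mat_def U_mat_def H2neg_def mat_of_rows_list_def)
  finally show "bdiag (1\<^sub>m a) Q3 * C_mat (a + 3) * (bdiag (1\<^sub>m a) Q3)\<^sup>T = bdiag (C_mat (a + 1)) H2neg" .
qed (auto intro: bdiag_carrier simp: C_mat_carrier Q3_carrier Q3_inv_carrier)

lemma C_mat_1_congruent: "congruent_mat (C_mat 1) one1"
proof (rule congruent_matI[of _ 1 "mat 1 1 (\<lambda>_. sqrt 2)" "mat 1 1 (\<lambda>_. 1 / sqrt 2)"])
  show "mat 1 1 (\<lambda>_. sqrt 2) * mat 1 1 (\<lambda>_. 1 / sqrt 2) = 1\<^sub>m 1"
    by (rule eq_matI) (auto simp: scalar_prod_def)
  show "mat 1 1 (\<lambda>_. sqrt 2) * C_mat 1 * (mat 1 1 (\<lambda>_. sqrt 2))\<^sup>T = one1"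
    by (rule eq_matI) (auto simp: scalar_prod_def one1_def C_mat_def U_mat_def)
qed (auto simp: C_mat_carrier)

lemma C_mat_2_congruent: "congruent_mat (C_mat 2) Gamma2"
proof (rule congruent_matI[of _ 2 "mat_of_rows_list 2 [[sqrt 2, - sqrt 2], [0, - sqrt 2]]"
      "mat_of_rows_list 2 [[1 / sqrt 2, - 1 / sqrt 2], [0, - 1 / sqrt 2]]"])
  show "mat_of_rows_list 2 [[sqrt 2, - sqrt 2], [0, - sqrt 2]]
      * mat_of_rows_list 2 [[1 / sqrt 2, - 1 / sqrt 2], [0, - 1 / sqrt 2]] = 1\<^sub>m 2"
    by (rule eq_matI) (auto simp: mat_of_rows_list_def scalar_prod_def less_Suc_eq numeral_eq_Suc)
  show "mat_of_rows_list 2 [[sqrt 2, - sqrt 2], [0, - sqrt 2]] * C_mat 2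
      * (mat_of_rows_list 2 [[sqrt 2, - sqrt 2], [0, - sqrt 2]])\<^sup>T = Gamma2"
    by (rule eq_matI)
      (auto simp: Gamma2_def C_mat_def U_mat_def mat_of_rows_list_def scalar_prod_def
        less_Suc_eq numeral_eq_Suc)
qed (auto simp: C_mat_carrier mat_of_rows_list_def numeral_2_eq_2)

lemma C_mat_add_double_congruent:
  assumes "1 \<le> k" "congruent_mat (C_mat k) B"
  shows "congruent_mat (C_mat (k + 2 * n)) (bdiag B (bdiag_pow H2neg n))"
proof (induction n)
  case 0
  show ?case
    using assms(2) by (simp add: bdiag_empty_right)
next
  case (Suc n)
  obtain a where a: "k + 2 * n = a + 1"
    using assms(1) by (metis add.commute le_Suc_ex trans_le_add1 Suc_eq_plus1)
  have "congruent_mat (C_mat (k + 2 * Suc n)) (bdiag (C_mat (k + 2 * n)) H2neg)"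
    using C_mat_add3_congruent[of a] a by (simp add: numeral_3_eq_3)
  also have "congruent_mat \<dots> (bdiag (bdiag B (bdiag_pow H2neg n)) H2neg)"
    using Suc.IH congruent_mat_refl[OF H2neg_carrier] by (rule congruent_mat_bdiag)
  also have "\<dots> = bdiag B (bdiag_pow H2neg (Suc n))"
    by (simp only: bdiag_pow_Suc_right bdiag_assoc)
  finally show ?case .
qed

theorem lemma7p6:
  fixes m :: nat
  assumes "m \<ge> 1"
  shows "(even m \<longrightarrow> congruent_mat (C_mat m) (bdiag Gamma2 (bdiag_pow H2neg ((m - 2) div 2))))
       \<and> (odd m \<longrightarrow> congruent_mat (C_mat m) (bdiag one1 (bdiag_pow H2neg ((m - 1) div 2))))"
proof (intro conjI impI)
  assume "even m"
  with assms have "m = 2 + 2 * ((m - 2) div 2)"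
    by (auto elim!: evenE)
  then show "congruent_mat (C_mat m) (bdiag Gamma2 (bdiag_pow H2neg ((m - 2) div 2)))"
    using C_mat_add_double_congruent[OF _ C_mat_2_congruent] by (metis one_le_numeral)
next
  assume "odd m"
  then have "m = 1 + 2 * ((m - 1) div 2)"
    by (auto elim!: oddE)
  then show "congruent_mat (C_mat m) (bdiag one1 (bdiag_pow H2neg ((m - 1) div 2)))"
    using C_mat_add_double_congruent[OF _ C_mat_1_congruent] by (metis order_refl)
qed

end
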